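(* Let $P\subset V$ be a rational convex polyhedron with $\dim(P)=\ell$, and let $\sigma\in\mathrm{lin}(P)\cap\Lambda_{\mathbb{Q}}$. Then the difference $[C_P\cap(\mathbb{Z}\oplus\Lambda)]-[C_{P,\sigma}\cap(\mathbb{Z}\oplus\Lambda)]$ belongs to $\mathcal{S}_{\ell-1}(\Lambda)$. Moreover, if $P$ is a cone with apex set $L$, then this difference is a finite signed sum of characteristic functions $[C_{P',\sigma'}\cap(\mathbb{Z}\oplus\Lambda)]$ where each $P'$ is a cone of dimension at most $\ell-1$ with apex set $L$ and $\sigma'\in\Lambda_{\mathbb{Q}}$.
   Context: $V$ finite-dimensional real vector space, $\Lambda\subset V$ full-rank lattice, $\Lambda_{\mathbb{Q}}=\Lambda\otimes\mathbb{Q}$. Rational polyhedron: finite intersection of half-spaces $\{v:\langle a,v\rangle\ge c\}$, $a\in\mathrm{Hom}(\Lambda,\mathbb{Z})\otimes\mathbb{Q}$, $c\in\mathbb{Q}$; $\mathrm{lin}(P)$ is the linear subspace parallel to its affine hull and $\dim P=\dim\mathrm{lin}(P)$. $C_{P,\sigma}=\{(t,tv+\sigma):t>0,v\in P\}\subset\mathbb{R}\oplus V$, $C_P=C_{P,0}$, and $[\,\cdot\,]$ denotes indicator functions. A cone is a rational polyhedron $w+K$ with $K$ a closed convex polyhedral cone, with apex set $w+(K\cap -K)$. Quasi-polynomials: algebra generated by polynomials and periodic functions. $\mathcal{S}(\Lambda)$: functions on $\mathbb{Z}\oplus\Lambda$ of the form $\sum_{P\in\mathcal{P}}\sum_{\sigma\in\Sigma_P}q_{P,\sigma}[C_{P,\sigma}]$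 with $\mathcal{P}$ rational polyhedra, $\Sigma_P\subset\Lambda_{\mathbb{Q}}$, $q_{P,\sigma}$ quasi-polynomial, and $\{P+[0,1]\sigma\}$ locally finite in $V$. For $0\le j\le\dim V$, $\mathcal{S}_j(\Lambda)$ is the subspace of $m\in\mathcal{S}(\Lambda)$ admitting such an expression with all polyhedra of dimension $\le j$, and $\mathcal{S}_{-1}(\Lambda)=\{0\}$. *)

theory Defs
  imports "HOL-Analysis.Analysis"
begin

text \<open>The ambient space V is modelled as real^'n (any finite-dimensional real
vector space is isomorphic to one of these); Lambda is an arbitrary full-rank lattice.\<close>

definition full_rank_lattice :: "(real^'n) set \<Rightarrow> bool" where
  "full_rank_lattice Lam \<longleftrightarrow>
     (\<exists>b :: 'n \<Rightarrow> real^'n. inj b \<and> independent (range b) \<and>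
        Lam = range (\<lambda>z :: 'n \<Rightarrow> int. \<Sum>i\<in>UNIV. of_int (z i) *\<^sub>R b i))"

definition rat_lattice :: "(real^'n) set \<Rightarrow> (real^'n) set" where
  "rat_lattice Lam = {(1 / real m) *\<^sub>R x | m x. m > 0 \<and> x \<in> Lam}"

text \<open>Elements of Hom(Lambda,Z) tensor Q, represented via the inner product.\<close>
definition rat_functional :: "(real^'n) set \<Rightarrow> real^'n \<Rightarrow> bool" where
  "rat_functional Lam a \<longleftrightarrow> (\<forall>x\<in>Lam. a \<bullet> x \<in> \<rat>)"

definition rat_polyhedron :: "(real^'n) set \<Rightarrow> (real^'n) set \<Rightarrow> bool" where
  "rat_polyhedron Lam P \<longleftrightarrow>
     (\<exists>F. finite F \<and> (\<forall>(a,c)\<in>F. rat_functional Lam a \<and> c \<in> \<rat>) \<and>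
          P = (\<Inter>(a,c)\<in>F. {v. a \<bullet> v \<ge> c}))"

definition lin_space :: "(real^'n) set \<Rightarrow> (real^'n) set" where
  "lin_space P = span {x - y | x y. x \<in> P \<and> y \<in> P}"

definition coneC :: "(real^'n) set \<Rightarrow> real^'n \<Rightarrow> (real \<times> (real^'n)) set" where
  "coneC P \<sigma> = {(t, t *\<^sub>R v + \<sigma>) | t v. t > 0 \<and> v \<in> P}"

definition ZLat :: "(real^'n) set \<Rightarrow> (real \<times> (real^'n)) set" where
  "ZLat Lam = {(t, v). t \<in> \<int> \<and> v \<in> Lam}"

definition lat_ind :: "(real^'n) set \<Rightarrow> (real^'n) set \<Rightarrow> real^'n \<Rightarrow> real \<times> (real^'n) \<Rightarrow> real" where
  "lat_ind Lam P \<sigma> = indicator (coneC P \<sigma> \<inter> ZLat Lam)"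

text \<open>Quasi-polynomials on Z + Lambda: algebra generated by polynomials (constants and
coordinate functions) and periodic functions (periodic w.r.t. m(Z + Lambda), m>0, which
every finite-index sublattice contains).\<close>
inductive_set quasi_poly :: "(real^'n) set \<Rightarrow> (real \<times> (real^'n) \<Rightarrow> real) set"
  for Lam :: "(real^'n) set" where
  qp_const: "(\<lambda>_. c) \<in> quasi_poly Lam"
| qp_t: "(\<lambda>x. fst x) \<in> quasi_poly Lam"
| qp_coord: "(\<lambda>x. snd x $ i) \<in> quasi_poly Lam"
| qp_periodic: "m > (0::nat) \<Longrightarrow>
     (\<forall>x\<in>ZLat Lam. \<forall>y\<in>ZLat Lam. f (x + of_nat m *\<^sub>R y) = f x) \<Longrightarrow> f \<in> quasi_poly Lam"
| qp_add: "f \<in> quasi_poly Lam \<Longrightarrow> g \<in> quasi_poly Lam \<Longrightarrow> (\<lambda>x. f x + g x) \<in> quasi_poly Lam"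
| qp_mult: "f \<in> quasi_poly Lam \<Longrightarrow> g \<in> quasi_poly Lam \<Longrightarrow> (\<lambda>x. f x * g x) \<in> quasi_poly Lam"

definition locally_finite_family :: "'i set \<Rightarrow> ('i \<Rightarrow> (real^'n) set) \<Rightarrow> bool" where
  "locally_finite_family I A \<longleftrightarrow>
     (\<forall>x. \<exists>U. open U \<and> x \<in> U \<and> finite {i\<in>I. A i \<inter> U \<noteq> {}})"

text \<open>The (pointwise finite, by local finiteness) sum is taken over the pairs whose cone
contains the point.  For j = -1 this gives exactly the zero function.\<close>
definition S_j :: "(real^'n) set \<Rightarrow> int \<Rightarrow> (real \<times> (real^'n) \<Rightarrow> real) set" where
  "S_j Lam j = {m. \<exists>(I :: ((real^'n) set \<times> (real^'n)) set) q.
      (\<forall>(P,\<sigma>)\<in>I. rat_polyhedron Lam P \<and> aff_dim P \<le> j \<and> \<sigma> \<in> rat_lattice Lam) \<and>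
      (\<forall>i\<in>I. q i \<in> quasi_poly Lam) \<and>
      locally_finite_family I (\<lambda>(P,\<sigma>). P + closed_segment 0 \<sigma>) \<and>
      (\<forall>x\<in>ZLat Lam. m x = (\<Sum>i\<in>{i\<in>I. x \<in> coneC (fst i) (snd i)}. q i x))}"

definition rat_cone_with_apex :: "(real^'n) set \<Rightarrow> (real^'n) set \<Rightarrow> (real^'n) set \<Rightarrow> bool" where
  "rat_cone_with_apex Lam P L \<longleftrightarrow> rat_polyhedron Lam P \<and>
     (\<exists>w K. K \<noteq> {} \<and> cone K \<and> convex K \<and> closed K \<and> polyhedron K \<and>
        P = (\<lambda>k. w + k) ` K \<and> L = (\<lambda>k. w + k) ` (K \<inter> uminus ` K))"

end

theory Submission
  imports Defs
begin

(*
  Fix a lattice point (t, y), t > 0, and follow v(r) = (y - r \<sigma>) / t for 0 \<le> r \<le> 1: the point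
  lies in C_P iff v(0) \<in> P and in C_{P,\<sigma>} iff v(1) \<in> P.  The parameters r with v(r) \<in> P form an
  interval, so the difference of the two indicators is [the interval ends in [0, 1)] minus
  [it begins in (0, 1]].  At an endpoint r some inequality a \<bullet> v \<ge> c of P with a \<bullet> \<sigma> \<noteq> 0 is
  tight, i.e. (t, y) \<in> C_{Q, r \<sigma>} for the face Q on which it is tight; inclusion-exclusion over the
  tight inequalities turns this into a signed sum of such indicators, and dim Q < dim P because
  \<sigma> \<in> lin(P) is transversal to the hyperplane.  Since a \<bullet> y - c t \<in> (1/D) \<int> on lattice points, all
  endpoints lie in one finite set of rationals r.  Faces of a cone with apex set L are again cones
  with apex set L.
*)

section \<open>Linear constraints along a line\<close>

definition feasible_at :: "'i set \<Rightarrow> ('i \<Rightarrow> real) \<Rightarrow> ('i \<Rightarrow> real) \<Rightarrow> real \<Rightarrow> bool" where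
  "feasible_at F s G r \<longleftrightarrow> (\<forall>i\<in>F. r * s i \<le> G i)"

lemma feasible_at_uminus: "feasible_at F (\<lambda>i. - s i) G r \<longleftrightarrow> feasible_at F s G (- r)"
  by (simp add: feasible_at_def)

lemma feasible_at_tight_pos_le:
  assumes "feasible_at F s G \<nu>" "i \<in> F" "s i > 0" "G i = r * s i"
  shows "\<nu> \<le> r"
  using assms unfolding feasible_at_def by (metis mult_le_cancel_right_pos)

lemma feasible_at_tight_neg_ge:
  assumes "feasible_at F s G \<mu>" "i \<in> F" "s i < 0" "G i = r * s i"
  shows "r \<le> \<mu>"
  using assms unfolding feasible_at_def by (metis mult_le_cancel_right_neg)

lemma feasible_at_exit_point:
  assumes "finite F" "feasible_at F s G \<mu>" "\<not> feasible_at F s G \<nu>" "\<mu> < \<nu>"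
  obtains \<beta> i where "\<mu> \<le> \<beta>" "\<beta> < \<nu>" "feasible_at F s G \<beta>" "i \<in> F" "s i > 0" "G i = \<beta> * s i"
proof -
  define W where "W = {i\<in>F. s i > 0}"
  obtain i0 where i0: "i0 \<in> F" "G i0 < \<nu> * s i0"
    using assms(3) unfolding feasible_at_def by force
  have "\<not> s i0 \<le> 0"
  proof
    assume "s i0 \<le> 0"
    then have "\<nu> * s i0 \<le> \<mu> * s i0" using assms(4) by (simp add: mult_right_mono_neg)
    then show False using assms(2) i0 unfolding feasible_at_def by force
  qed
  then have "i0 \<in> W" using i0 W_def by auto
  \<comment> \<open>Constraints with s i \<le> 0 stay satisfied for all parameters \<ge> \<mu>, so the exit point is
    the least ratio G i / s i over the others.\<close>
  define \<beta> where "\<beta> = Min ((\<lambda>i. G i / s i) ` W)"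
  have finW: "finite W" using assms(1) W_def by auto
  have Min_le: "\<beta> \<le> G i / s i" if "i \<in> W" for i
    unfolding \<beta>_def using finW that by auto
  have "\<beta> \<in> (\<lambda>i. G i / s i) ` W"
    unfolding \<beta>_def using finW \<open>i0 \<in> W\<close> by (intro Min_in) auto
  then obtain j where j: "j \<in> W" "\<beta> = G j / s j" by blast
  have "G i0 / s i0 < \<nu>"
    using i0 \<open>i0 \<in> W\<close> by (simp add: W_def pos_divide_less_eq)
  then have "\<beta> < \<nu>"
    using Min_le[OF \<open>i0 \<in> W\<close>] by linarith
  moreover have "\<mu> \<le> \<beta>"
    using assms(2) j unfolding feasible_at_def W_def by (simp add: pos_le_divide_eq)
  moreover have "feasible_at F s G \<beta>"
    unfolding feasible_at_def
  proof
    fix i assume "i \<in> F"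
    show "\<beta> * s i \<le> G i"
    proof (cases "s i > 0")
      case True
      then show ?thesis using Min_le[of i] \<open>i \<in> F\<close> by (simp add: W_def pos_le_divide_eq)
    next
      case False
      then have "\<beta> * s i \<le> \<mu> * s i" using \<open>\<mu> \<le> \<beta>\<close> by (simp add: mult_right_mono_neg)
      then show ?thesis using assms(2) \<open>i \<in> F\<close> unfolding feasible_at_def by force
    qed
  qed
  moreover have "j \<in> F" "s j > 0" "G j = \<beta> * s j" using j W_def by auto
  ultimately show ?thesis using that by blast
qed

lemma feasible_at_entry_point:
  assumes "finite F" "feasible_at F s G \<nu>" "\<not> feasible_at F s G \<mu>" "\<mu> < \<nu>"
  obtains \<alpha> i where "\<mu> < \<alpha>" "\<alpha> \<le> \<nu>" "feasible_at F s G \<alpha>" "i \<in> F" "s i < 0" "G i = \<alpha> * s i"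
proof -
  obtain \<beta> i where "- \<nu> \<le> \<beta>" "\<beta> < - \<mu>" "feasible_at F (\<lambda>i. - s i) G \<beta>"
      "i \<in> F" "- s i > 0" "G i = \<beta> * - s i"
    using feasible_at_exit_point[of F "\<lambda>i. - s i" G "- \<nu>" "- \<mu>"] assms
    by (auto simp: feasible_at_uminus)
  then show ?thesis
    using that[of "- \<beta>" i] by (simp add: feasible_at_uminus)
qed

lemma feasible_at_endpoint_identity:
  fixes s G :: "'i \<Rightarrow> real"
  assumes "finite F"
  shows "of_bool (feasible_at F s G 0) - of_bool (feasible_at F s G 1) =
    of_bool (\<exists>r\<in>{0..<1}. feasible_at F s G r \<and> (\<exists>i\<in>F. s i > 0 \<and> G i = r * s i))
  - (of_bool (\<exists>r\<in>{0<..1}. feasible_at F s G r \<and> (\<exists>i\<in>F. s i < 0 \<and> G i = r * s i)) :: real)"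
    (is "_ = of_bool ?exit - of_bool ?entry")
proof -
  let ?A = "feasible_at F s G"
  have not_exit: "\<not> ?exit" if "?A 1"
    using feasible_at_tight_pos_le[OF that] by fastforce
  have not_entry: "\<not> ?entry" if "?A 0"
    using feasible_at_tight_neg_ge[OF that] by fastforce
  have exit: ?exit if "?A 0" "\<not> ?A 1"
    using feasible_at_exit_point[OF assms that zero_less_one] by force
  have entry: ?entry if "\<not> ?A 0" "?A 1"
    using feasible_at_entry_point[OF assms that(2,1) zero_less_one] by force
  have "?A 0 \<or> ?entry" if ?exit
  proof -
    obtain r where r: "0 \<le> r" "r < 1" "?A r" using \<open>?exit\<close> by auto
    show ?thesis
    proof (cases "?A 0")
      case False
      with r have "0 < r" by (cases "r = 0") auto
      then show ?thesis using feasible_at_entry_point[OF assms r(3) False] r(2) by force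
    qed simp
  qed
  moreover have "?A 1 \<or> ?exit" if ?entry
  proof -
    obtain r where r: "0 < r" "r \<le> 1" "?A r" using \<open>?entry\<close> by auto
    show ?thesis
    proof (cases "?A 1")
      case False
      with r have "r < 1" by (cases "r = 1") auto
      then show ?thesis using feasible_at_exit_point[OF assms r(3) False] r(1) by force
    qed simp
  qed
  ultimately show ?thesis
    using not_exit not_entry exit entry by (cases "?A 0"; cases "?A 1") auto
qed

lemma of_bool_Bex_inclusion_exclusion:
  assumes "finite E"
  shows "(\<Sum>S | S \<subseteq> E \<and> S \<noteq> {}. (-1) ^ (card S + 1) * of_bool (\<forall>i\<in>S. P i))
    = (of_bool (\<exists>i\<in>E. P i) :: 'a::ring_1)"
proof -
  \<comment> \<open>Library inclusion-exclusion for the additive set function X \<mapsto> [() \<in> X] on sets of units.\<close>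
  have "(of_bool (\<exists>i\<in>E. P i) :: 'a) = of_bool (() \<in> (\<Union>i\<in>E. {u. P i}))"
    by auto
  also have "\<dots> = (\<Sum>S | S \<subseteq> E \<and> S \<noteq> {}. (-1) ^ (card S + 1) * of_bool (() \<in> (\<Inter>i\<in>S. {u. P i})))"
    by (rule Incl_Excl_UN) (use assms in \<open>auto simp: disjnt_iff\<close>)
  also have "\<dots> = (\<Sum>S | S \<subseteq> E \<and> S \<noteq> {}. (-1) ^ (card S + 1) * of_bool (\<forall>i\<in>S. P i))"
    by (intro sum.cong) auto
  finally show ?thesis ..
qed

lemma sum_of_bool_unique:
  assumes "finite R" "\<And>r r'. r \<in> R \<Longrightarrow> r' \<in> R \<Longrightarrow> Q r \<Longrightarrow> Q r' \<Longrightarrow> r = r'"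
  shows "(\<Sum>r\<in>R. of_bool (Q r)) = (of_bool (\<exists>r\<in>R. Q r) :: 'a::semiring_1)"
proof (cases "\<exists>r\<in>R. Q r")
  case True
  then obtain r0 where "r0 \<in> R" "Q r0" by blast
  with assms(2) have "R \<inter> {r. Q r} = {r0}" by blast
  then show ?thesis using True assms(1) by simp
qed simp

lemma sum_tight_subsets_feasible_at:
  fixes s G :: "'i \<Rightarrow> real"
  assumes "finite R" "finite E" "E \<subseteq> F" and sign: "(\<forall>i\<in>E. s i > 0) \<or> (\<forall>i\<in>E. s i < 0)"
  shows "(\<Sum>(r, S) \<in> R \<times> {S. S \<subseteq> E \<and> S \<noteq> {}}.
            (-1) ^ (card S + 1) * of_bool (feasible_at F s G r \<and> (\<forall>i\<in>S. G i = r * s i)))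
       = (of_bool (\<exists>r\<in>R. feasible_at F s G r \<and> (\<exists>i\<in>E. G i = r * s i)) :: real)"
proof -
  have unique: "r = r'"
    if "feasible_at F s G r \<and> (\<exists>i\<in>E. G i = r * s i)"
      and "feasible_at F s G r' \<and> (\<exists>i\<in>E. G i = r' * s i)" for r r'
  proof -
    from that obtain i i' where i: "i \<in> E" "G i = r * s i" "i' \<in> E" "G i' = r' * s i'"
      by blast
    from sign show ?thesis
    proof
      assume "\<forall>i\<in>E. s i > 0"
      then have "r' \<le> r" "r \<le> r'"
        using feasible_at_tight_pos_le[of F s G r' i r] feasible_at_tight_pos_le[of F s G r i' r']
          \<open>E \<subseteq> F\<close> that i by auto
      then show ?thesis by simp
    next
      assume "\<forall>i\<in>E. s i < 0"
      then have "r \<le> r'" "r' \<le> r"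
        using feasible_at_tight_neg_ge[of F s G r i' r'] feasible_at_tight_neg_ge[of F s G r' i r]
          \<open>E \<subseteq> F\<close> that i by auto
      then show ?thesis by simp
    qed
  qed
  have "(\<Sum>(r, S) \<in> R \<times> {S. S \<subseteq> E \<and> S \<noteq> {}}.
            (-1) ^ (card S + 1) * of_bool (feasible_at F s G r \<and> (\<forall>i\<in>S. G i = r * s i)))
      = (\<Sum>r\<in>R. of_bool (feasible_at F s G r) *
           (\<Sum>S | S \<subseteq> E \<and> S \<noteq> {}. (-1) ^ (card S + 1) * of_bool (\<forall>i\<in>S. G i = r * s i)) :: real)"
    by (simp add: sum.cartesian_product sum_distrib_left of_bool_conj mult_ac)
  also have "\<dots> = (\<Sum>r\<in>R. of_bool (feasible_at F s G r \<and> (\<exists>i\<in>E. G i = r * s i)))"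
    by (simp only: of_bool_Bex_inclusion_exclusion[OF \<open>finite E\<close>] of_bool_conj)
  also have "\<dots> = of_bool (\<exists>r\<in>R. feasible_at F s G r \<and> (\<exists>i\<in>E. G i = r * s i))"
    using unique by (intro sum_of_bool_unique[OF \<open>finite R\<close>])
  finally show ?thesis .
qed

lemma feasible_at_difference_inclusion_exclusion:
  fixes s G :: "'i \<Rightarrow> real"
  assumes "finite F" "finite R"
    and R: "\<And>i r. i \<in> F \<Longrightarrow> s i \<noteq> 0 \<Longrightarrow> r \<in> {0..1} \<Longrightarrow> G i = r * s i \<Longrightarrow> r \<in> R"
  shows "of_bool (feasible_at F s G 0) - of_bool (feasible_at F s G 1) =
    (\<Sum>(r, S) \<in> (R \<inter> {0..<1}) \<times> {S. S \<subseteq> {i\<in>F. s i > 0} \<and> S \<noteq> {}}.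
       (-1) ^ (card S + 1) * of_bool (feasible_at F s G r \<and> (\<forall>i\<in>S. G i = r * s i)))
  - (\<Sum>(r, S) \<in> (R \<inter> {0<..1}) \<times> {S. S \<subseteq> {i\<in>F. s i < 0} \<and> S \<noteq> {}}.
       (-1) ^ (card S + 1) * of_bool (feasible_at F s G r \<and> (\<forall>i\<in>S. G i = r * s i)) :: real)"
proof -
  have "(\<exists>r\<in>R \<inter> {0..<1}. feasible_at F s G r \<and> (\<exists>i\<in>{i\<in>F. s i > 0}. G i = r * s i)) \<longleftrightarrow>
        (\<exists>r\<in>{0..<1}. feasible_at F s G r \<and> (\<exists>i\<in>F. s i > 0 \<and> G i = r * s i))"
    using R by fastforce
  moreover have "(\<exists>r\<in>R \<inter> {0<..1}. feasible_at F s G r \<and> (\<exists>i\<in>{i\<in>F. s i < 0}. G i = r * s i)) \<longleftrightarrow>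
        (\<exists>r\<in>{0<..1}. feasible_at F s G r \<and> (\<exists>i\<in>F. s i < 0 \<and> G i = r * s i))"
    using R by fastforce
  ultimately show ?thesis
    using assms(1,2)
    by (subst (1 2) sum_tight_subsets_feasible_at) (auto simp: feasible_at_endpoint_identity)
qed

section \<open>Faces of a system of linear inequalities\<close>

definition tight_face :: "('a::real_inner \<times> real) set \<Rightarrow> ('a \<times> real) set \<Rightarrow> 'a set" where
  "tight_face F S = {v. (\<forall>(a, c)\<in>F. c \<le> a \<bullet> v) \<and> (\<forall>(a, c)\<in>S. a \<bullet> v = c)}"

lemma tight_face_empty: "tight_face F {} = (\<Inter>(a, c)\<in>F. {v. a \<bullet> v \<ge> c})"
  unfolding tight_face_def by auto

lemma tight_face_subset: "tight_face F S \<subseteq> tight_face F {}"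
  unfolding tight_face_def by auto

lemma rat_polyhedron_tight_face:
  assumes "finite F" "\<forall>(a, c)\<in>F. rat_functional Lam a \<and> c \<in> \<rat>" "S \<subseteq> F"
  shows "rat_polyhedron Lam (tight_face F S)"
proof -
  define F' where "F' = F \<union> (\<lambda>(a, c). (- a, - c)) ` S"
  have "finite F'"
    unfolding F'_def using assms(1,3) finite_subset by auto
  moreover have "rat_functional Lam a \<and> c \<in> \<rat>" if "(a, c) \<in> F'" for a c
  proof -
    have "(a, c) \<in> F \<or> (- a, - c) \<in> F"
      using that assms(3) unfolding F'_def by auto
    then show ?thesis
      using assms(2) unfolding rat_functional_def by auto
  qed
  moreover have "v \<in> tight_face F S \<longleftrightarrow> v \<in> (\<Inter>(a, c)\<in>F'. {v. a \<bullet> v \<ge> c})" for v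
  proof -
    have "v \<in> (\<Inter>(a, c)\<in>F'. {v. a \<bullet> v \<ge> c}) \<longleftrightarrow> (\<forall>(a, c)\<in>F'. c \<le> a \<bullet> v)"
      by auto
    also have "\<dots> \<longleftrightarrow> (\<forall>(a, c)\<in>F. c \<le> a \<bullet> v) \<and> (\<forall>(a, c)\<in>S. a \<bullet> v \<le> c)"
      unfolding F'_def ball_Un Ball_image_comp by (auto simp: case_prod_unfold)
    also have "\<dots> \<longleftrightarrow> v \<in> tight_face F S"
    proof -
      have "a \<bullet> v = c"
        if "(a, c) \<in> S" "\<forall>(a, c)\<in>F. c \<le> a \<bullet> v" "\<forall>(a, c)\<in>S. a \<bullet> v \<le> c" for a c
        using that assms(3) by (metis (mono_tags, lifting) case_prodD order_antisym subsetD)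
      then show ?thesis
        unfolding tight_face_def by auto
    qed
    finally show ?thesis ..
  qed
  ultimately show ?thesis
    unfolding rat_polyhedron_def by (intro exI[of _ F']) auto
qed

lemma aff_dim_lt_transversal_hyperplane:
  fixes P Q :: "(real^'n) set"
  assumes "Q \<subseteq> P" "Q \<subseteq> {v. a \<bullet> v = c}" "\<sigma> \<in> lin_space P" "a \<bullet> \<sigma> \<noteq> 0"
  shows "aff_dim Q < aff_dim P"
proof (rule ccontr)
  assume "\<not> aff_dim Q < aff_dim P"
  then have dims: "aff_dim Q = aff_dim P"
    using aff_dim_subset[OF assms(1)] by simp
  have "P \<subseteq> {v. a \<bullet> v = c}"
  proof (cases "Q = {}")
    case True
    then show ?thesis using dims aff_dim_empty[of P] by simp
  next
    case False
    then have "affine hull Q = affine hull P"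
      using dims assms(1) by (intro affine_dim_equal) (auto simp: hull_mono)
    moreover have "affine hull Q \<subseteq> {v. a \<bullet> v = c}"
      using assms(2) by (intro hull_minimal) (auto simp: affine_hyperplane)
    ultimately show ?thesis
      using hull_subset[of P affine] by blast
  qed
  then have "a \<bullet> x = c" if "x \<in> P" for x
    using that by blast
  then have "{x - y | x y. x \<in> P \<and> y \<in> P} \<subseteq> {z. a \<bullet> z = 0}"
    by (auto simp: inner_diff_right)
  then have "lin_space P \<subseteq> {z. a \<bullet> z = 0}"
    unfolding lin_space_def by (intro span_minimal subspace_hyperplane)
  then show False
    using assms(3,4) by blast
qed

lemma tight_face_tight: "v \<in> tight_face F S \<Longrightarrow> (a, c) \<in> S \<Longrightarrow> a \<bullet> v = c"
  unfolding tight_face_def by auto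

lemma tight_face_valid: "v \<in> tight_face F S \<Longrightarrow> (a, c) \<in> F \<Longrightarrow> c \<le> a \<bullet> v"
  unfolding tight_face_def by auto

lemma aff_dim_tight_face_lt:
  fixes F S :: "((real^'n) \<times> real) set"
  assumes "p \<in> S" "fst p \<bullet> \<sigma> \<noteq> 0" "\<sigma> \<in> lin_space (tight_face F {})"
  shows "aff_dim (tight_face F S) < aff_dim (tight_face F {})"
proof (rule aff_dim_lt_transversal_hyperplane[OF tight_face_subset _ assms(3,2)])
  show "tight_face F S \<subseteq> {v. fst p \<bullet> v = snd p}"
    using tight_face_tight[of _ F S "fst p" "snd p"] assms(1) by auto
qed

lemma cone_valid_inequality:
  assumes "cone K" "K \<noteq> {}" "\<forall>k\<in>K. c \<le> a \<bullet> (w + k)"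
  shows "c \<le> a \<bullet> w" "\<forall>k\<in>K. 0 \<le> a \<bullet> k"
proof -
  show "c \<le> a \<bullet> w"
    using assms(3) cone_contains_0[OF assms(1)] assms(2) by force
  show "\<forall>k\<in>K. 0 \<le> a \<bullet> k"
  proof (rule ballI, rule ccontr)
    fix k assume k: "k \<in> K" "\<not> 0 \<le> a \<bullet> k"
    define l where "l = (a \<bullet> w - c + 1) / - (a \<bullet> k)"
    have "l \<ge> 0"
      unfolding l_def using \<open>c \<le> a \<bullet> w\<close> k(2) by (intro divide_nonneg_pos) auto
    then have "l *\<^sub>R k \<in> K"
      using assms(1) k(1) by (simp add: cone_def)
    then have "c \<le> a \<bullet> (w + l *\<^sub>R k)"
      using assms(3) by blast
    moreover have "l * (a \<bullet> k) = - (a \<bullet> w - c + 1)"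
      unfolding l_def using k(2) by simp
    ultimately show False
      by (simp add: inner_add_right)
  qed
qed

lemma polyhedral_cone_kernel_section:
  fixes K :: "'a::euclidean_space set"
  assumes "cone K" "convex K" "closed K" "polyhedron K" "finite A"
  defines "K' \<equiv> K \<inter> (\<Inter>a\<in>A. {k. a \<bullet> k = 0})"
  shows "cone K'" "convex K'" "closed K'" "polyhedron K'"
proof -
  show "cone K'"
    using assms(1) unfolding K'_def cone_def by auto
  show "convex K'"
    unfolding K'_def by (intro convex_Int assms(2) convex_INT) (auto intro: convex_hyperplane)
  show "closed K'"
    unfolding K'_def by (intro closed_Int assms(3) closed_INT) (auto intro: closed_hyperplane)
  show "polyhedron K'"
    unfolding K'_def using assms(5)
    by (intro polyhedron_Int assms(4) polyhedron_Inter) (auto intro: polyhedron_hyperplane)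
qed

lemma lineality_kernel_section:
  fixes K :: "'a::real_inner set"
  assumes "\<And>a k. a \<in> A \<Longrightarrow> k \<in> K \<Longrightarrow> 0 \<le> a \<bullet> k"
  defines "K' \<equiv> K \<inter> (\<Inter>a\<in>A. {k. a \<bullet> k = 0})"
  shows "K' \<inter> uminus ` K' = K \<inter> uminus ` K"
proof
  show "K \<inter> uminus ` K \<subseteq> K' \<inter> uminus ` K'"
  proof
    fix k assume k: "k \<in> K \<inter> uminus ` K"
    then have "- k \<in> K" by auto
    have "a \<bullet> k = 0" if "a \<in> A" for a
      using assms(1)[OF that k[THEN IntD1]] assms(1)[OF that \<open>- k \<in> K\<close>] by simp
    then have "k \<in> K'" "- k \<in> K'"
      unfolding K'_def using k \<open>- k \<in> K\<close> by auto
    then show "k \<in> K' \<inter> uminus ` K'"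
      by (auto intro: image_eqI[of k uminus "- k"])
  qed
qed (auto simp: K'_def)

lemma cone_supporting_section:
  fixes K :: "'a::euclidean_space set"
  assumes K: "cone K" "convex K" "closed K" "polyhedron K" and "finite S"
    and valid: "\<And>a c. (a, c) \<in> S \<Longrightarrow> \<forall>k\<in>K. c \<le> a \<bullet> (w + k)"
    and touch: "k0 \<in> K" "\<And>a c. (a, c) \<in> S \<Longrightarrow> a \<bullet> (w + k0) = c"
  obtains K' where "K' \<noteq> {}" "cone K'" "convex K'" "closed K'" "polyhedron K'"
    "{v \<in> (\<lambda>k. w + k) ` K. \<forall>(a, c)\<in>S. a \<bullet> v = c} = (\<lambda>k. w + k) ` K'"
    "K' \<inter> uminus ` K' = K \<inter> uminus ` K"
proof -
  have "K \<noteq> {}"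
    using touch by auto
  then have nonneg: "\<forall>k\<in>K. 0 \<le> a \<bullet> k" and w_tight: "a \<bullet> w = c" if "(a, c) \<in> S" for a c
    using cone_valid_inequality[OF K(1) _ valid[OF that]] touch(1) touch(2)[OF that]
    by (force simp: inner_add_right)+
  define K' where "K' = K \<inter> (\<Inter>a\<in>fst ` S. {k. a \<bullet> k = 0})"
  have "{k\<in>K. \<forall>(a, c)\<in>S. a \<bullet> (w + k) = c} = K'"
  proof -
    have "a \<bullet> (w + k) = c \<longleftrightarrow> a \<bullet> k = 0" if "(a, c) \<in> S" for a c k
      using w_tight[OF that] by (auto simp: inner_add_right)
    then show ?thesis
      unfolding K'_def by fastforce
  qed
  have "K' \<noteq> {}"
    unfolding K'_def using cone_contains_0[OF K(1)] \<open>K \<noteq> {}\<close> by auto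
  moreover have "cone K'" "convex K'" "closed K'" "polyhedron K'"
    unfolding K'_def by (rule polyhedral_cone_kernel_section[OF K finite_imageI[OF \<open>finite S\<close>]])+
  moreover from \<open>{k\<in>K. \<forall>(a, c)\<in>S. a \<bullet> (w + k) = c} = K'\<close>
  have "{v \<in> (\<lambda>k. w + k) ` K. \<forall>(a, c)\<in>S. a \<bullet> v = c} = (\<lambda>k. w + k) ` K'"
    by (simp add: Compr_image_eq)
  moreover have "K' \<inter> uminus ` K' = K \<inter> uminus ` K"
    unfolding K'_def using nonneg by (intro lineality_kernel_section) auto
  ultimately show ?thesis
    by (rule that)
qed

lemma rat_cone_with_apex_tight_face:
  assumes "finite F" "\<forall>(a, c)\<in>F. rat_functional Lam a \<and> c \<in> \<rat>" "S \<subseteq> F"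
    and "rat_cone_with_apex Lam (tight_face F {}) L" "tight_face F S \<noteq> {}"
  shows "rat_cone_with_apex Lam (tight_face F S) L"
proof -
  obtain w K where K: "cone K" "convex K" "closed K" "polyhedron K"
    and P: "tight_face F {} = (\<lambda>k. w + k) ` K" and L: "L = (\<lambda>k. w + k) ` (K \<inter> uminus ` K)"
    using assms(4) unfolding rat_cone_with_apex_def by blast
  have face_eq: "tight_face F S = {v \<in> tight_face F {}. \<forall>(a, c)\<in>S. a \<bullet> v = c}"
    using assms(3) unfolding tight_face_def by auto
  obtain v where "v \<in> tight_face F S"
    using assms(5) by blast
  then obtain k0 where k0: "k0 \<in> K" "w + k0 \<in> tight_face F S"
    using tight_face_subset[of F S] unfolding P by blast
  have valid: "\<forall>k\<in>K. c \<le> a \<bullet> (w + k)" if "(a, c) \<in> S" for a c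
  proof
    fix k assume "k \<in> K"
    then have "w + k \<in> tight_face F {}"
      unfolding P by blast
    then show "c \<le> a \<bullet> (w + k)"
      using tight_face_valid that assms(3) by blast
  qed
  have touch: "a \<bullet> (w + k0) = c" if "(a, c) \<in> S" for a c
    using tight_face_tight[OF k0(2) that] .
  obtain K' where K': "K' \<noteq> {}" "cone K'" "convex K'" "closed K'" "polyhedron K'"
      "{v \<in> (\<lambda>k. w + k) ` K. \<forall>(a, c)\<in>S. a \<bullet> v = c} = (\<lambda>k. w + k) ` K'"
      "K' \<inter> uminus ` K' = K \<inter> uminus ` K"
    by (rule cone_supporting_section[OF K finite_subset[OF assms(3,1)] valid k0(1) touch])
  moreover have "tight_face F S = (\<lambda>k. w + k) ` K'"
    using K'(6) unfolding face_eq P .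
  moreover have "L = (\<lambda>k. w + k) ` (K' \<inter> uminus ` K')"
    unfolding L K'(7) ..
  ultimately show ?thesis
    unfolding rat_cone_with_apex_def using rat_polyhedron_tight_face[OF assms(1-3)] by blast
qed

section \<open>Rational lattices\<close>

lemma full_rank_latticeE:
  fixes Lam :: "(real^'n) set"
  assumes "full_rank_lattice Lam"
  obtains b :: "'n \<Rightarrow> real^'n"
  where "Lam = range (\<lambda>z :: 'n \<Rightarrow> int. \<Sum>i\<in>UNIV. of_int (z i) *\<^sub>R b i)" "\<And>j. b j \<in> Lam"
proof -
  obtain b :: "'n \<Rightarrow> real^'n"
    where Lam: "Lam = range (\<lambda>z :: 'n \<Rightarrow> int. \<Sum>i\<in>UNIV. of_int (z i) *\<^sub>R b i)"
    using assms unfolding full_rank_lattice_def by blast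
  moreover have "b j \<in> Lam" for j
  proof -
    have "(\<Sum>i\<in>UNIV. of_int (of_bool (i = j)) *\<^sub>R b i) = (\<Sum>i\<in>UNIV. if i = j then b i else 0)"
      by (intro sum.cong) auto
    then show ?thesis
      unfolding Lam by (intro range_eqI[where x="\<lambda>i. of_bool (i = j)"]) simp
  qed
  ultimately show ?thesis
    using that by blast
qed

lemma full_rank_lattice_int_scaleR:
  fixes Lam :: "(real^'n) set"
  assumes "full_rank_lattice Lam" "x \<in> Lam"
  shows "of_int k *\<^sub>R x \<in> Lam"
proof -
  obtain b :: "'n \<Rightarrow> real^'n"
    where Lam: "Lam = range (\<lambda>z :: 'n \<Rightarrow> int. \<Sum>i\<in>UNIV. of_int (z i) *\<^sub>R b i)"
    using full_rank_latticeE[OF assms(1)] by blast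
  obtain z where "x = (\<Sum>i\<in>UNIV. of_int (z i) *\<^sub>R b i)"
    using assms(2) unfolding Lam by blast
  then have "of_int k *\<^sub>R x = (\<Sum>i\<in>UNIV. of_int (k * z i) *\<^sub>R b i)"
    by (simp add: scaleR_sum_right)
  then show ?thesis
    unfolding Lam by (intro range_eqI[where x="\<lambda>i. k * z i"])
qed

lemma rat_lattice_scaleR:
  assumes "full_rank_lattice Lam" "\<sigma> \<in> rat_lattice Lam" "r \<in> \<rat>"
  shows "r *\<^sub>R \<sigma> \<in> rat_lattice Lam"
proof -
  obtain m x where mx: "\<sigma> = (1 / real m) *\<^sub>R x" "m > 0" "x \<in> Lam"
    using assms(2) unfolding rat_lattice_def by blast
  obtain p q where pq: "q > 0" "r = of_int p / of_int q"
    using assms(3) by (elim Rats_cases') auto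
  have "r *\<^sub>R \<sigma> = (1 / real (nat q * m)) *\<^sub>R (of_int p *\<^sub>R x)"
    using pq unfolding mx(1) by simp
  moreover have "nat q * m > 0"
    using pq mx by simp
  ultimately show ?thesis
    unfolding rat_lattice_def using full_rank_lattice_int_scaleR[OF assms(1) mx(3)] by blast
qed

lemma rat_functional_inner_rat_lattice:
  assumes "rat_functional Lam a" "\<sigma> \<in> rat_lattice Lam"
  shows "a \<bullet> \<sigma> \<in> \<rat>"
proof -
  obtain m x where "\<sigma> = (1 / real m) *\<^sub>R x" "x \<in> Lam"
    using assms(2) unfolding rat_lattice_def by blast
  then show ?thesis
    using assms(1) unfolding rat_functional_def by simp
qed

lemma Rats_common_denominator:
  assumes "finite A" "A \<subseteq> \<rat>"
  shows "\<exists>D::nat. D > 0 \<and> (\<forall>r\<in>A. real D * r \<in> \<int>)"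
  using assms
proof (induction A rule: finite_induct)
  case (insert x A)
  then obtain D :: nat where D: "D > 0" "\<forall>r\<in>A. real D * r \<in> \<int>"
    by blast
  have "x \<in> \<rat>"
    using insert.prems by blast
  then obtain p q where pq: "q > 0" "x = of_int p / of_int q"
    by (elim Rats_cases') auto
  have "real (D * nat q) * r \<in> \<int>" if "r \<in> insert x A" for r
  proof (cases "r = x")
    case True
    then show ?thesis using pq by simp
  next
    case False
    then have "real D * r \<in> \<int>"
      using D(2) that by blast
    moreover have "real (D * nat q) * r = real (nat q) * (real D * r)"
      by simp
    ultimately show ?thesis
      by (metis Ints_mult Ints_of_nat)
  qed
  then show ?case
    using D(1) pq(1) by (intro exI[of _ "D * nat q"]) simp
qed (intro exI[of _ 1], simp)

lemma finite_Ints_multiples_in_unit_interval: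
  fixes k :: real
  assumes "k \<noteq> 0"
  shows "finite {r \<in> {0..1}. k * r \<in> \<int>}"
proof -
  have "{r \<in> {0..1}. k * r \<in> \<int>} \<subseteq> (\<lambda>z. z / k) ` {z \<in> \<int>. - \<bar>k\<bar> \<le> z \<and> z \<le> \<bar>k\<bar>}"
  proof
    fix r assume r: "r \<in> {r \<in> {0..1}. k * r \<in> \<int>}"
    then have "\<bar>k * r\<bar> \<le> \<bar>k\<bar>"
      by (auto simp: abs_mult intro: mult_left_le)
    then show "r \<in> (\<lambda>z. z / k) ` {z \<in> \<int>. - \<bar>k\<bar> \<le> z \<and> z \<le> \<bar>k\<bar>}"
      using r assms by (intro image_eqI[of _ _ "k * r"]) auto
  qed
  then show ?thesis
    using finite_int_segment finite_subset by blast
qed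

lemma rat_constraints_common_denominator:
  fixes Lam :: "(real^'n) set"
  assumes "full_rank_lattice Lam" "finite F" "\<forall>(a, c)\<in>F. rat_functional Lam a \<and> c \<in> \<rat>"
  obtains D :: nat where "D > 0"
    "\<And>a c t y. (a, c) \<in> F \<Longrightarrow> t \<in> \<int> \<Longrightarrow> y \<in> Lam \<Longrightarrow> real D * (a \<bullet> y - c * t) \<in> \<int>"
proof -
  obtain b :: "'n \<Rightarrow> real^'n"
    where Lam: "Lam = range (\<lambda>z :: 'n \<Rightarrow> int. \<Sum>i\<in>UNIV. of_int (z i) *\<^sub>R b i)" and "\<And>j. b j \<in> Lam"
    using full_rank_latticeE[OF assms(1)] by blast
  define A where "A = snd ` F \<union> (\<lambda>(p, j). fst p \<bullet> b j) ` (F \<times> UNIV)"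
  have "finite A"
    unfolding A_def using assms(2) by simp
  moreover have "A \<subseteq> \<rat>"
    unfolding A_def using assms(3) \<open>\<And>j. b j \<in> Lam\<close> by (auto simp: rat_functional_def)
  ultimately obtain D :: nat where D: "D > 0" "\<forall>r\<in>A. real D * r \<in> \<int>"
    using Rats_common_denominator by blast
  have "real D * (a \<bullet> y - c * t) \<in> \<int>" if ac: "(a, c) \<in> F" and "t \<in> \<int>" "y \<in> Lam" for a c t y
  proof -
    obtain z where y: "y = (\<Sum>i\<in>UNIV. of_int (z i) *\<^sub>R b i)"
      using \<open>y \<in> Lam\<close> unfolding Lam by blast
    have "real D * (a \<bullet> b i) \<in> \<int>" for i
      using D(2) ac unfolding A_def by force
    moreover have "real D * c \<in> \<int>"
      using D(2) ac unfolding A_def by force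
    moreover have "real D * (a \<bullet> y - c * t) =
        (\<Sum>i\<in>UNIV. of_int (z i) * (real D * (a \<bullet> b i))) - (real D * c) * t"
      unfolding y by (simp add: inner_sum_right sum_distrib_left algebra_simps)
    ultimately show ?thesis
      using \<open>t \<in> \<int>\<close> by (simp add: Ints_sum)
  qed
  then show ?thesis
    using that D(1) by blast
qed

lemma lattice_critical_parameters:
  fixes F :: "((real^'n) \<times> real) set" and Lam :: "(real^'n) set"
  assumes "full_rank_lattice Lam" "finite F" "\<forall>(a, c)\<in>F. rat_functional Lam a \<and> c \<in> \<rat>"
    and "\<sigma> \<in> rat_lattice Lam"
  obtains R where "finite R" "\<And>r. r \<in> R \<Longrightarrow> r *\<^sub>R \<sigma> \<in> rat_lattice Lam"
    "\<And>p t y r. p \<in> F \<Longrightarrow> t \<in> \<int> \<Longrightarrow> y \<in> Lam \<Longrightarrow> fst p \<bullet> \<sigma> \<noteq> 0 \<Longrightarrow> r \<in> {0..1} \<Longrightarrow>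
      fst p \<bullet> y - snd p * t = r * (fst p \<bullet> \<sigma>) \<Longrightarrow> r \<in> R"
proof -
  obtain D :: nat where "D > 0" and D:
    "\<And>a c t y. (a, c) \<in> F \<Longrightarrow> t \<in> \<int> \<Longrightarrow> y \<in> Lam \<Longrightarrow> real D * (a \<bullet> y - c * t) \<in> \<int>"
    using rat_constraints_common_denominator[OF assms(1-3)] by blast
  \<comment> \<open>D (a \<bullet> y - c t) \<in> \<int> forces D (a \<bullet> \<sigma>) r \<in> \<int> at every tight parameter r.\<close>
  define R where "R = (\<Union>p\<in>{p\<in>F. fst p \<bullet> \<sigma> \<noteq> 0}. {r \<in> {0..1}. real D * (fst p \<bullet> \<sigma>) * r \<in> \<int>})"
  have "finite {r \<in> {0..1}. real D * (fst p \<bullet> \<sigma>) * r \<in> \<int>}" if "fst p \<bullet> \<sigma> \<noteq> 0"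
    for p :: "(real^'n) \<times> real"
    using that \<open>D > 0\<close> by (intro finite_Ints_multiples_in_unit_interval) simp
  then have "finite R"
    unfolding R_def using assms(2) by (intro finite_UN_I) auto
  moreover have "r *\<^sub>R \<sigma> \<in> rat_lattice Lam" if r: "r \<in> R" for r
  proof -
    obtain p where p: "p \<in> F" "fst p \<bullet> \<sigma> \<noteq> 0" "real D * (fst p \<bullet> \<sigma>) * r \<in> \<int>"
      using r unfolding R_def by blast
    have "rat_functional Lam (fst p)"
      using assms(3) p(1) by (auto simp: case_prod_unfold)
    then have "fst p \<bullet> \<sigma> \<in> \<rat>"
      using rat_functional_inner_rat_lattice assms(4) by blast
    then have "r = (real D * (fst p \<bullet> \<sigma>) * r) / (real D * (fst p \<bullet> \<sigma>)) \<and>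
        real D * (fst p \<bullet> \<sigma>) * r \<in> \<rat> \<and> real D * (fst p \<bullet> \<sigma>) \<in> \<rat>"
      using p(2,3) \<open>D > 0\<close> Ints_subset_Rats by auto
    then have "r \<in> \<rat>"
      by (metis Rats_divide)
    then show ?thesis
      by (rule rat_lattice_scaleR[OF assms(1,4)])
  qed
  moreover have "r \<in> R" if "p \<in> F" "t \<in> \<int>" "y \<in> Lam" "fst p \<bullet> \<sigma> \<noteq> 0" "r \<in> {0..1}"
    "fst p \<bullet> y - snd p * t = r * (fst p \<bullet> \<sigma>)" for p t y r
  proof -
    have "real D * (fst p \<bullet> \<sigma>) * r \<in> \<int>"
      using D[of "fst p" "snd p" t y] that by (simp add: mult_ac)
    then show ?thesis
      unfolding R_def using that by blast
  qed
  ultimately show ?thesis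
    using that by blast
qed

section \<open>Lattice points of the cones C_{P,\<sigma>}\<close>

lemma coneC_iff: "x \<in> coneC Q \<tau> \<longleftrightarrow> fst x > 0 \<and> (1 / fst x) *\<^sub>R (snd x - \<tau>) \<in> Q"
proof
  assume "x \<in> coneC Q \<tau>"
  then obtain t v where "x = (t, t *\<^sub>R v + \<tau>)" "t > 0" "v \<in> Q"
    unfolding coneC_def by blast
  then show "fst x > 0 \<and> (1 / fst x) *\<^sub>R (snd x - \<tau>) \<in> Q"
    by simp
next
  assume x: "fst x > 0 \<and> (1 / fst x) *\<^sub>R (snd x - \<tau>) \<in> Q"
  show "x \<in> coneC Q \<tau>"
    unfolding coneC_def mem_Collect_eq
    by (rule exI[of _ "fst x"], rule exI[of _ "(1 / fst x) *\<^sub>R (snd x - \<tau>)"]) (use x in auto)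
qed

lemma lat_ind_ZLat: "x \<in> ZLat Lam \<Longrightarrow> lat_ind Lam Q \<tau> x = of_bool (x \<in> coneC Q \<tau>)"
  unfolding lat_ind_def by simp

lemma lat_ind_eq_0: "\<not> (x \<in> ZLat Lam \<and> fst x > 0) \<Longrightarrow> lat_ind Lam Q \<tau> x = 0"
  unfolding lat_ind_def by (auto simp: coneC_iff)

lemma lat_ind_empty: "lat_ind Lam {} \<tau> x = 0"
  by (simp add: lat_ind_def coneC_def)

lemma scaled_mem_tight_face_iff:
  fixes \<sigma> y :: "'a::real_inner"
  assumes "t > 0"
  shows "(1 / t) *\<^sub>R (y - r *\<^sub>R \<sigma>) \<in> tight_face F S \<longleftrightarrow>
    feasible_at F (\<lambda>p. fst p \<bullet> \<sigma>) (\<lambda>p. fst p \<bullet> y - snd p * t) r \<and>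
    (\<forall>p\<in>S. fst p \<bullet> y - snd p * t = r * (fst p \<bullet> \<sigma>))"
proof -
  have inner: "a \<bullet> ((1 / t) *\<^sub>R (y - r *\<^sub>R \<sigma>)) = (a \<bullet> y - r * (a \<bullet> \<sigma>)) / t" for a
    by (simp add: inner_diff_right divide_inverse)
  have "c \<le> a \<bullet> ((1 / t) *\<^sub>R (y - r *\<^sub>R \<sigma>)) \<longleftrightarrow> r * (a \<bullet> \<sigma>) \<le> a \<bullet> y - c * t" for a c
    unfolding inner using assms by (simp add: pos_le_divide_eq algebra_simps)
  moreover have "a \<bullet> ((1 / t) *\<^sub>R (y - r *\<^sub>R \<sigma>)) = c \<longleftrightarrow> a \<bullet> y - c * t = r * (a \<bullet> \<sigma>)" for a c
    unfolding inner using assms by (auto simp: divide_eq_eq algebra_simps)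
  ultimately show ?thesis
    unfolding tight_face_def feasible_at_def case_prod_unfold by simp
qed

lemma lat_ind_tight_face:
  "lat_ind Lam (tight_face F S) (r *\<^sub>R \<sigma>) x = of_bool (x \<in> ZLat Lam \<and> fst x > 0 \<and>
     feasible_at F (\<lambda>p. fst p \<bullet> \<sigma>) (\<lambda>p. fst p \<bullet> snd x - snd p * fst x) r \<and>
     (\<forall>p\<in>S. fst p \<bullet> snd x - snd p * fst x = r * (fst p \<bullet> \<sigma>)))"
proof -
  have "x \<in> coneC (tight_face F S) (r *\<^sub>R \<sigma>) \<longleftrightarrow> fst x > 0 \<and>
     feasible_at F (\<lambda>p. fst p \<bullet> \<sigma>) (\<lambda>p. fst p \<bullet> snd x - snd p * fst x) r \<and>
     (\<forall>p\<in>S. fst p \<bullet> snd x - snd p * fst x = r * (fst p \<bullet> \<sigma>))"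
    by (cases "fst x > 0") (simp_all add: coneC_iff scaled_mem_tight_face_iff)
  then show ?thesis
    unfolding lat_ind_def by auto
qed

lemma lat_ind_difference_eq_face_sum:
  fixes F :: "((real^'n) \<times> real) set"
  assumes "finite F" "finite R"
    and R: "\<And>p t y r. p \<in> F \<Longrightarrow> t \<in> \<int> \<Longrightarrow> y \<in> Lam \<Longrightarrow> fst p \<bullet> \<sigma> \<noteq> 0 \<Longrightarrow>
      r \<in> {0..1} \<Longrightarrow> fst p \<bullet> y - snd p * t = r * (fst p \<bullet> \<sigma>) \<Longrightarrow> r \<in> R"
  shows "lat_ind Lam (tight_face F {}) 0 x - lat_ind Lam (tight_face F {}) \<sigma> x =
    (\<Sum>(r, S) \<in> (R \<inter> {0..<1}) \<times> {S. S \<subseteq> {p\<in>F. fst p \<bullet> \<sigma> > 0} \<and> S \<noteq> {}}.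
       (-1) ^ (card S + 1) * lat_ind Lam (tight_face F S) (r *\<^sub>R \<sigma>) x)
  - (\<Sum>(r, S) \<in> (R \<inter> {0<..1}) \<times> {S. S \<subseteq> {p\<in>F. fst p \<bullet> \<sigma> < 0} \<and> S \<noteq> {}}.
       (-1) ^ (card S + 1) * lat_ind Lam (tight_face F S) (r *\<^sub>R \<sigma>) x)"
proof (cases "x \<in> ZLat Lam \<and> fst x > 0")
  case True
  define s where "s p = fst p \<bullet> \<sigma>" for p :: "(real^'n) \<times> real"
  define G where "G p = fst p \<bullet> snd x - snd p * fst x" for p :: "(real^'n) \<times> real"
  have s_eq: "fst p \<bullet> \<sigma> = s p" for p
    unfolding s_def ..
  have face: "lat_ind Lam (tight_face F S) (r *\<^sub>R \<sigma>) x =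
      of_bool (feasible_at F s G r \<and> (\<forall>p\<in>S. G p = r * s p))" for S r
    using True unfolding lat_ind_tight_face s_def G_def by simp
  have "lat_ind Lam (tight_face F {}) 0 x = of_bool (feasible_at F s G 0)"
    using face[of "{}" 0] by simp
  moreover have "lat_ind Lam (tight_face F {}) \<sigma> x = of_bool (feasible_at F s G 1)"
    using face[of "{}" 1] by simp
  moreover have "r \<in> R" if "p \<in> F" "s p \<noteq> 0" "r \<in> {0..1}" "G p = r * s p" for p r
    using R[of p "fst x" "snd x" r] True that unfolding s_def G_def ZLat_def by auto
  ultimately show ?thesis
    unfolding face s_eq using feasible_at_difference_inclusion_exclusion[OF assms(1,2)] by simp
next
  case False
  then show ?thesis
    by (simp add: lat_ind_eq_0)
qed

lemma sum_eq_sum_list_of_support: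
  assumes "finite I" "set xs = {i\<in>I. Q i}" "distinct xs" "\<And>i. i \<in> I \<Longrightarrow> \<not> Q i \<Longrightarrow> f i = 0"
  shows "(\<Sum>i\<in>I. f i) = (\<Sum>i\<leftarrow>xs. f i)"
proof -
  have "(\<Sum>i\<in>I. f i) = (\<Sum>i\<in>{i\<in>I. Q i}. f i)"
    using assms(1,4) by (intro sum.mono_neutral_right) auto
  also have "\<dots> = (\<Sum>i\<leftarrow>xs. f i)"
    unfolding assms(2)[symmetric] using assms(3) by (simp add: sum_list_distinct_conv_sum_set)
  finally show ?thesis .
qed

lemma lat_ind_difference_eq_face_lists:
  fixes F :: "((real^'n) \<times> real) set"
  assumes "finite F" "finite R"
    and R: "\<And>p t y r. p \<in> F \<Longrightarrow> t \<in> \<int> \<Longrightarrow> y \<in> Lam \<Longrightarrow> fst p \<bullet> \<sigma> \<noteq> 0 \<Longrightarrow>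
      r \<in> {0..1} \<Longrightarrow> fst p \<bullet> y - snd p * t = r * (fst p \<bullet> \<sigma>) \<Longrightarrow> r \<in> R"
  obtains xp xm where
    "\<And>r S. (r, S) \<in> set xp \<union> set xm \<Longrightarrow>
      r \<in> R \<and> S \<subseteq> F \<and> (\<exists>p\<in>S. fst p \<bullet> \<sigma> \<noteq> 0) \<and> tight_face F S \<noteq> {}"
    "\<And>x. lat_ind Lam (tight_face F {}) 0 x - lat_ind Lam (tight_face F {}) \<sigma> x =
      (\<Sum>(r, S)\<leftarrow>xp. (-1) ^ (card S + 1) * lat_ind Lam (tight_face F S) (r *\<^sub>R \<sigma>) x) +
      (\<Sum>(r, S)\<leftarrow>xm. (-1) ^ card S * lat_ind Lam (tight_face F S) (r *\<^sub>R \<sigma>) x)"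
proof -
  define Ip where "Ip = (R \<inter> {0..<1}) \<times> {S. S \<subseteq> {p\<in>F. fst p \<bullet> \<sigma> > 0} \<and> S \<noteq> {}}"
  define Im where "Im = (R \<inter> {0<..1}) \<times> {S. S \<subseteq> {p\<in>F. fst p \<bullet> \<sigma> < 0} \<and> S \<noteq> {}}"
  have "finite Ip" "finite Im"
    unfolding Ip_def Im_def using assms(1,2) by auto
  obtain xp where xp: "set xp = {i\<in>Ip. tight_face F (snd i) \<noteq> {}}" "distinct xp"
    using finite_distinct_list[of "{i\<in>Ip. tight_face F (snd i) \<noteq> {}}"] \<open>finite Ip\<close> by auto
  obtain xm where xm: "set xm = {i\<in>Im. tight_face F (snd i) \<noteq> {}}" "distinct xm"
    using finite_distinct_list[of "{i\<in>Im. tight_face F (snd i) \<noteq> {}}"] \<open>finite Im\<close> by auto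
  have "r \<in> R \<and> S \<subseteq> F \<and> (\<exists>p\<in>S. fst p \<bullet> \<sigma> \<noteq> 0) \<and> tight_face F S \<noteq> {}"
    if "(r, S) \<in> set xp \<union> set xm" for r S
  proof -
    from that have "(r, S) \<in> Ip \<union> Im" "tight_face F S \<noteq> {}"
      unfolding xp(1) xm(1) by auto
    moreover from this(1) have "r \<in> R" "S \<subseteq> F" "\<exists>p\<in>S. fst p \<bullet> \<sigma> \<noteq> 0"
      unfolding Ip_def Im_def by (auto, fastforce+)
    ultimately show ?thesis
      by blast
  qed
  moreover have "lat_ind Lam (tight_face F {}) 0 x - lat_ind Lam (tight_face F {}) \<sigma> x =
      (\<Sum>(r, S)\<leftarrow>xp. (-1) ^ (card S + 1) * lat_ind Lam (tight_face F S) (r *\<^sub>R \<sigma>) x) +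
      (\<Sum>(r, S)\<leftarrow>xm. (-1) ^ card S * lat_ind Lam (tight_face F S) (r *\<^sub>R \<sigma>) x)" for x
  proof -
    let ?fp = "\<lambda>(r, S). (-1) ^ (card S + 1) * lat_ind Lam (tight_face F S) (r *\<^sub>R \<sigma>) x"
    let ?fm = "\<lambda>(r, S). (-1) ^ card S * lat_ind Lam (tight_face F S) (r *\<^sub>R \<sigma>) x"
    have "lat_ind Lam (tight_face F {}) 0 x - lat_ind Lam (tight_face F {}) \<sigma> x =
        (\<Sum>i\<in>Ip. ?fp i) - (\<Sum>i\<in>Im. ?fp i)"
      unfolding Ip_def Im_def by (rule lat_ind_difference_eq_face_sum[OF assms])
    also have "\<dots> = (\<Sum>i\<in>Ip. ?fp i) + (\<Sum>i\<in>Im. ?fm i)"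
      by (simp add: sum_negf[symmetric] case_prod_unfold)
    also have "\<dots> = (\<Sum>i\<leftarrow>xp. ?fp i) + (\<Sum>i\<leftarrow>xm. ?fm i)"
      using sum_eq_sum_list_of_support[OF \<open>finite Ip\<close> xp, of ?fp]
        sum_eq_sum_list_of_support[OF \<open>finite Im\<close> xm, of ?fm]
      by (simp add: lat_ind_empty case_prod_unfold)
    finally show ?thesis .
  qed
  ultimately show ?thesis
    by (rule that)
qed

lemma lat_ind_difference_eq_signed_faces:
  fixes F :: "((real^'n) \<times> real) set" and Lam :: "(real^'n) set"
  assumes "full_rank_lattice Lam" "finite F" "\<forall>(a, c)\<in>F. rat_functional Lam a \<and> c \<in> \<rat>"
    and "\<sigma> \<in> rat_lattice Lam"
  obtains ts :: "(int \<times> (real^'n) set \<times> (real^'n)) list"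
  where "\<And>e Q \<tau>. (e, Q, \<tau>) \<in> set ts \<Longrightarrow> e \<in> {1, -1} \<and> \<tau> \<in> rat_lattice Lam \<and> Q \<noteq> {} \<and>
      (\<exists>S\<subseteq>F. Q = tight_face F S \<and> (\<exists>p\<in>S. fst p \<bullet> \<sigma> \<noteq> 0))"
    "\<And>x. lat_ind Lam (tight_face F {}) 0 x - lat_ind Lam (tight_face F {}) \<sigma> x =
      (\<Sum>(e, Q, \<tau>)\<leftarrow>ts. of_int e * lat_ind Lam Q \<tau> x)"
proof -
  obtain R where "finite R" and R_lattice: "\<And>r. r \<in> R \<Longrightarrow> r *\<^sub>R \<sigma> \<in> rat_lattice Lam"
    and R_crit: "\<And>p t y r. p \<in> F \<Longrightarrow> t \<in> \<int> \<Longrightarrow> y \<in> Lam \<Longrightarrow> fst p \<bullet> \<sigma> \<noteq> 0 \<Longrightarrow> r \<in> {0..1} \<Longrightarrow>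
      fst p \<bullet> y - snd p * t = r * (fst p \<bullet> \<sigma>) \<Longrightarrow> r \<in> R"
    using lattice_critical_parameters[OF assms] by blast
  show ?thesis
  proof (rule lat_ind_difference_eq_face_lists[OF assms(2) \<open>finite R\<close>])
    show "r \<in> R" if "p \<in> F" "t \<in> \<int>" "y \<in> Lam" "fst p \<bullet> \<sigma> \<noteq> 0" "r \<in> {0..1}"
      "fst p \<bullet> y - snd p * t = r * (fst p \<bullet> \<sigma>)" for p t y r
      using R_crit that .
  next
    fix xp xm
    assume faces: "\<And>r S. (r, S) \<in> set xp \<union> set xm \<Longrightarrow>
        r \<in> R \<and> S \<subseteq> F \<and> (\<exists>p\<in>S. fst p \<bullet> \<sigma> \<noteq> 0) \<and> tight_face F S \<noteq> {}"
      and diff: "\<And>x. lat_ind Lam (tight_face F {}) 0 x - lat_ind Lam (tight_face F {}) \<sigma> x =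
        (\<Sum>(r, S)\<leftarrow>xp. (-1) ^ (card S + 1) * lat_ind Lam (tight_face F S) (r *\<^sub>R \<sigma>) x) +
        (\<Sum>(r, S)\<leftarrow>xm. (-1) ^ card S * lat_ind Lam (tight_face F S) (r *\<^sub>R \<sigma>) x)"
    define ts :: "(int \<times> (real^'n) set \<times> (real^'n)) list"
      where "ts = map (\<lambda>(r, S). ((-1) ^ (card S + 1), tight_face F S, r *\<^sub>R \<sigma>)) xp @
        map (\<lambda>(r, S). ((-1) ^ card S, tight_face F S, r *\<^sub>R \<sigma>)) xm"
    have "e \<in> {1, -1} \<and> \<tau> \<in> rat_lattice Lam \<and> Q \<noteq> {} \<and>
        (\<exists>S\<subseteq>F. Q = tight_face F S \<and> (\<exists>p\<in>S. fst p \<bullet> \<sigma> \<noteq> 0))"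
      if "(e, Q, \<tau>) \<in> set ts" for e Q \<tau>
    proof -
      from that obtain r S where rS: "(r, S) \<in> set xp \<union> set xm" "Q = tight_face F S" "\<tau> = r *\<^sub>R \<sigma>"
          and e: "e = (-1) ^ (card S + 1) \<or> e = (-1) ^ card S"
        unfolding ts_def by (auto simp del: scaleR_cancel_right)
      have "(-1::int) ^ n \<in> {1, -1}" for n
        by (cases "even n") auto
      then have "e \<in> {1, -1}"
        using e by metis
      then show ?thesis
        using faces[OF rS(1)] R_lattice[of r] rS(2,3) by auto
    qed
    moreover have "lat_ind Lam (tight_face F {}) 0 x - lat_ind Lam (tight_face F {}) \<sigma> x =
        (\<Sum>(e, Q, \<tau>)\<leftarrow>ts. of_int e * lat_ind Lam Q \<tau> x)" for x
      unfolding diff ts_def by (simp add: comp_def case_prod_unfold)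
    ultimately show ?thesis
      by (rule that)
  qed
qed

lemma signed_lat_ind_sum_in_S_j:
  fixes ts :: "(int \<times> (real^'n) set \<times> (real^'n)) list"
  assumes "\<And>e Q \<tau>. (e, Q, \<tau>) \<in> set ts \<Longrightarrow> rat_polyhedron Lam Q \<and> aff_dim Q \<le> j \<and> \<tau> \<in> rat_lattice Lam"
  shows "(\<lambda>x. \<Sum>(e, Q, \<tau>)\<leftarrow>ts. of_int e * lat_ind Lam Q \<tau> x) \<in> S_j Lam j"
proof -
  define I where "I = snd ` set ts"
  define q where "q k = (\<lambda>_::real \<times> (real^'n). real_of_int (\<Sum>i \<in> {i \<in> {..<length ts}. snd (ts ! i) = k}. fst (ts ! i)))"
    for k
  have "finite I"
    unfolding I_def by simp
  have "\<forall>(Q, \<tau>)\<in>I. rat_polyhedron Lam Q \<and> aff_dim Q \<le> j \<and> \<tau> \<in> rat_lattice Lam"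
    unfolding I_def using assms by fastforce
  moreover have "\<forall>k\<in>I. q k \<in> quasi_poly Lam"
    unfolding q_def by (auto intro: quasi_poly.qp_const)
  moreover have "locally_finite_family I (\<lambda>(P, \<sigma>). P + closed_segment 0 \<sigma>)"
    unfolding locally_finite_family_def using \<open>finite I\<close> by (intro allI exI[of _ UNIV]) auto
  moreover have "(\<Sum>(e, Q, \<tau>)\<leftarrow>ts. of_int e * lat_ind Lam Q \<tau> x) =
      (\<Sum>k\<in>{k\<in>I. x \<in> coneC (fst k) (snd k)}. q k x)" if "x \<in> ZLat Lam" for x
  proof -
    let ?c = "\<lambda>k. of_bool (x \<in> coneC (fst k) (snd k)) :: real"
    have "(\<Sum>(e, Q, \<tau>)\<leftarrow>ts. of_int e * lat_ind Lam Q \<tau> x) =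
        (\<Sum>i<length ts. of_int (fst (ts ! i)) * ?c (snd (ts ! i)))"
      using that by (simp add: sum_list_sum_nth atLeast0LessThan lat_ind_ZLat case_prod_unfold)
    also have "\<dots> = (\<Sum>k\<in>I. \<Sum>i \<in> {i \<in> {..<length ts}. snd (ts ! i) = k}.
        of_int (fst (ts ! i)) * ?c (snd (ts ! i)))"
    proof (rule sum.group[symmetric, OF finite_lessThan \<open>finite I\<close>])
      show "(\<lambda>i. snd (ts ! i)) ` {..<length ts} \<subseteq> I"
        unfolding I_def by (auto intro: nth_mem)
    qed
    also have "\<dots> = (\<Sum>k\<in>I. q k x * ?c k)"
      unfolding q_def by (auto simp: sum_distrib_right intro!: sum.cong)
    also have "\<dots> = (\<Sum>k\<in>{k\<in>I. x \<in> coneC (fst k) (snd k)}. q k x)"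
      using \<open>finite I\<close> by (simp add: Int_def)
    finally show ?thesis .
  qed
  ultimately show ?thesis
    unfolding S_j_def by (intro CollectI exI[of _ I] exI[of _ q] conjI) auto
qed

theorem lemma5p2:
  fixes Lam :: "(real^'n) set" and P :: "(real^'n) set" and \<sigma> :: "real^'n"
  assumes "full_rank_lattice Lam"
    and "rat_polyhedron Lam P"
    and "\<sigma> \<in> lin_space P" and "\<sigma> \<in> rat_lattice Lam"
  shows "(\<lambda>x. lat_ind Lam P 0 x - lat_ind Lam P \<sigma> x) \<in> S_j Lam (aff_dim P - 1) \<and>
         (\<forall>L. rat_cone_with_apex Lam P L \<longrightarrow>
           (\<exists>(ts :: (int \<times> (real^'n) set \<times> (real^'n)) list).
             (\<forall>(s, Q, tau)\<in>set ts. s \<in> {1, -1} \<and> rat_cone_with_apex Lam Q L \<and>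
                 aff_dim Q \<le> aff_dim P - 1 \<and> tau \<in> rat_lattice Lam) \<and>
             (\<forall>x. lat_ind Lam P 0 x - lat_ind Lam P \<sigma> x =
                  sum_list (map (\<lambda>(s, Q, tau). of_int s * lat_ind Lam Q tau x) ts))))"
proof -
  obtain F where F: "finite F" "\<forall>(a, c)\<in>F. rat_functional Lam a \<and> c \<in> \<rat>"
    and P: "P = tight_face F {}"
    using assms(2) unfolding rat_polyhedron_def tight_face_empty by blast
  obtain ts where ts: "\<And>e Q \<tau>. (e, Q, \<tau>) \<in> set ts \<Longrightarrow> e \<in> {1, -1} \<and> \<tau> \<in> rat_lattice Lam \<and>
        Q \<noteq> {} \<and> (\<exists>S\<subseteq>F. Q = tight_face F S \<and> (\<exists>p\<in>S. fst p \<bullet> \<sigma> \<noteq> 0))"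
    and diff: "\<And>x. lat_ind Lam P 0 x - lat_ind Lam P \<sigma> x = (\<Sum>(e, Q, \<tau>)\<leftarrow>ts. of_int e * lat_ind Lam Q \<tau> x)"
    using lat_ind_difference_eq_signed_faces[OF assms(1) F assms(4)] unfolding P by blast
  have faces: "rat_polyhedron Lam Q \<and> aff_dim Q \<le> aff_dim P - 1 \<and>
      (\<forall>L. rat_cone_with_apex Lam P L \<longrightarrow> rat_cone_with_apex Lam Q L)"
    if mem: "(e, Q, \<tau>) \<in> set ts" for e Q \<tau>
  proof -
    obtain S p where "S \<subseteq> F" "Q = tight_face F S" "Q \<noteq> {}" "p \<in> S" "fst p \<bullet> \<sigma> \<noteq> 0"
      using ts[OF mem] by blast
    then show ?thesis
      using rat_polyhedron_tight_face[OF F] aff_dim_tight_face_lt[of p S \<sigma> F] assms(3)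
        rat_cone_with_apex_tight_face[OF F] unfolding P by auto
  qed
  have "(\<lambda>x. lat_ind Lam P 0 x - lat_ind Lam P \<sigma> x) \<in> S_j Lam (aff_dim P - 1)"
    unfolding diff by (intro signed_lat_ind_sum_in_S_j) (use faces ts in blast)
  moreover have "\<forall>(s, Q, tau)\<in>set ts. s \<in> {1, -1} \<and> rat_cone_with_apex Lam Q L \<and>
      aff_dim Q \<le> aff_dim P - 1 \<and> tau \<in> rat_lattice Lam" if "rat_cone_with_apex Lam P L" for L
    using ts faces that by blast
  ultimately show ?thesis
    using diff by blast
qed

end
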